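(* Let $X$ be a Hausdorff topological space and $\mu:X^k\to X$ a continuous $k$-mean whose barycentric operator $\beta$ is power convergent. Define $\tilde\mu:X^{k+1}\to X$ by $\tilde\mu(\mathbf{x})=x^*$ where $\lim_n\beta^n(\mathbf{x})=(x^*,\ldots,x^* )$. Then: (i) $\tilde\mu$ is a $(k+1)$-mean on $X$ that is a $\beta$-invariant extension of $\mu$; (ii) any continuous $(k+1)$-mean on $X$ that is a $\beta$-invariant extension of $\mu$ equals $\tilde\mu$; (iii) if $\mu$ is symmetric, so is $\tilde\mu$.
   Context: A $k$-mean on $X$ is a map $\mu:X^k\to X$ with $\mu(x,\ldots,x)=x$; it is symmetric if it is invariant under permutations of its arguments. The barycentric operator $\beta=\beta_\mu:X^{k+1}\to X^{k+1}$ is $\beta(\mathbf{x})=(\mu(\pi_{\neq1}\mathbf{x}),\ldots,\mu(\pi_{\neq k+1}\mathbf{x}))$ where $\pi_{\neq j}(x_1,\ldots,x_{k+1})=(x_1,\ldots,x_{j-1},x_{j+1},\ldots,x_{k+1})$. $\beta$ is power convergent if for each $\mathbf{x}\in X^{k+1}$, $\lim_n\beta^n(\mathbf{x})=(x^*,\ldots,x^* )$ for some $x^*\in X$. A $(k+1)$-mean $\nu$ is a $\beta$-invariant extension of $\mu$ if $\nu\circ\beta_\mu=\nu$. *)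

theory Defs
  imports "HOL-Analysis.Analysis" "HOL-Combinatorics.Permutations"
begin

text \<open>Tuples in X^k are represented as extensional functions on the index set {..<k}
  (0-indexed), i.e. elements of PiE {..<k} (\<lambda>_. topspace X); X^k carries the
  product topology.\<close>

definition tuples :: "'a topology \<Rightarrow> nat \<Rightarrow> (nat \<Rightarrow> 'a) set" where
  "tuples X k = PiE {..<k} (\<lambda>_. topspace X)"

definition power_top :: "'a topology \<Rightarrow> nat \<Rightarrow> (nat \<Rightarrow> 'a) topology" where
  "power_top X k = product_topology (\<lambda>_. X) {..<k}"

definition diag :: "nat \<Rightarrow> 'a \<Rightarrow> (nat \<Rightarrow> 'a)" where
  "diag k x = (\<lambda>i\<in>{..<k}. x)"

definition is_mean :: "'a topology \<Rightarrow> nat \<Rightarrow> ((nat \<Rightarrow> 'a) \<Rightarrow> 'a) \<Rightarrow> bool" where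
  "is_mean X k \<mu> \<longleftrightarrow> (\<forall>x\<in>tuples X k. \<mu> x \<in> topspace X) \<and>
                      (\<forall>x\<in>topspace X. \<mu> (diag k x) = x)"

definition symmetric_mean :: "'a topology \<Rightarrow> nat \<Rightarrow> ((nat \<Rightarrow> 'a) \<Rightarrow> 'a) \<Rightarrow> bool" where
  "symmetric_mean X k \<mu> \<longleftrightarrow>
     (\<forall>p x. p permutes {..<k} \<and> x \<in> tuples X k \<longrightarrow> \<mu> (x \<circ> p) = \<mu> x)"

definition drop_coord :: "nat \<Rightarrow> nat \<Rightarrow> (nat \<Rightarrow> 'a) \<Rightarrow> (nat \<Rightarrow> 'a)" where
  "drop_coord k j x = (\<lambda>i\<in>{..<k}. if i < j then x i else x (Suc i))"

definition barycentric :: "nat \<Rightarrow> ((nat \<Rightarrow> 'a) \<Rightarrow> 'a) \<Rightarrow> (nat \<Rightarrow> 'a) \<Rightarrow> (nat \<Rightarrow> 'a)" where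
  "barycentric k \<mu> x = (\<lambda>j\<in>{..<Suc k}. \<mu> (drop_coord k j x))"

definition power_convergent :: "'a topology \<Rightarrow> nat \<Rightarrow> ((nat \<Rightarrow> 'a) \<Rightarrow> 'a) \<Rightarrow> bool" where
  "power_convergent X k \<mu> \<longleftrightarrow>
     (\<forall>x\<in>tuples X (Suc k). \<exists>y\<in>topspace X.
        limitin (power_top X (Suc k)) (\<lambda>n. (barycentric k \<mu> ^^ n) x) (diag (Suc k) y) sequentially)"

definition mean_limit :: "'a topology \<Rightarrow> nat \<Rightarrow> ((nat \<Rightarrow> 'a) \<Rightarrow> 'a) \<Rightarrow> (nat \<Rightarrow> 'a) \<Rightarrow> 'a" where
  "mean_limit X k \<mu> x = (THE y. y \<in> topspace X \<and>
        limitin (power_top X (Suc k)) (\<lambda>n. (barycentric k \<mu> ^^ n) x) (diag (Suc k) y) sequentially)"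

definition invariant_extension :: "'a topology \<Rightarrow> nat \<Rightarrow> ((nat \<Rightarrow> 'a) \<Rightarrow> 'a) \<Rightarrow> ((nat \<Rightarrow> 'a) \<Rightarrow> 'a) \<Rightarrow> bool" where
  "invariant_extension X k \<mu> \<nu> \<longleftrightarrow> is_mean X (Suc k) \<nu> \<and>
     (\<forall>x\<in>tuples X (Suc k). \<nu> (barycentric k \<mu> x) = \<nu> x)"

end

theory Submission
  imports Defs
begin

text \<open>The barycentric operator \<beta> fixes every diagonal tuple, and limits in the Hausdorff
  space X^(k+1) are unique, so \<tilde>\<mu> is a well-defined mean. Since the orbit of \<beta> x is the
  orbit of x shifted by one step, \<tilde>\<mu>(\<beta> x) = \<tilde>\<mu>(x). A continuous \<beta>-invariant mean \<nu>
  is constant along the orbit of x, so \<nu> x = \<nu>(\<beta>^n x) \<rightarrow> \<nu>(x*,...,x*) = x*. Finally,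
  if \<mu> is symmetric then \<beta> commutes with permutations of the coordinates; these act
  continuously on X^(k+1) and fix the diagonal, so they preserve the limit of the orbit.\<close>

lemma topspace_power_top [simp]: "topspace (power_top X k) = tuples X k"
  by (simp add: power_top_def tuples_def)

lemma Hausdorff_space_power_top: "Hausdorff_space X \<Longrightarrow> Hausdorff_space (power_top X k)"
  by (simp add: power_top_def Hausdorff_space_product_topology)

lemma diag_in_tuples: "y \<in> topspace X \<Longrightarrow> diag k y \<in> tuples X k"
  by (simp add: diag_def tuples_def)

lemma diag_Suc_inject: "diag (Suc k) y = diag (Suc k) z \<longleftrightarrow> y = z"
  unfolding diag_def by (metis lessThan_iff restrict_apply' zero_less_Suc)

lemma drop_coord_in_tuples: "x \<in> tuples X (Suc k) \<Longrightarrow> drop_coord k j x \<in> tuples X k"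
  unfolding tuples_def drop_coord_def by (auto simp: PiE_iff)

lemma drop_coord_diag: "drop_coord k j (diag (Suc k) y) = diag k y"
  unfolding drop_coord_def diag_def by auto

lemma barycentric_in_tuples:
  "is_mean X k \<mu> \<Longrightarrow> x \<in> tuples X (Suc k) \<Longrightarrow> barycentric k \<mu> x \<in> tuples X (Suc k)"
  using drop_coord_in_tuples[of x X k] unfolding is_mean_def
  by (auto simp: barycentric_def tuples_def PiE_iff)

lemma barycentric_diag:
  "is_mean X k \<mu> \<Longrightarrow> y \<in> topspace X \<Longrightarrow> barycentric k \<mu> (diag (Suc k) y) = diag (Suc k) y"
  unfolding barycentric_def is_mean_def drop_coord_diag by (auto simp: diag_def)

lemma funpow_barycentric_diag:
  "is_mean X k \<mu> \<Longrightarrow> y \<in> topspace X \<Longrightarrow> (barycentric k \<mu> ^^ n) (diag (Suc k) y) = diag (Suc k) y"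
  by (induction n) (auto simp: barycentric_diag)

lemma funpow_invariant:
  assumes "\<And>y. y \<in> S \<Longrightarrow> f y \<in> S" and "\<And>y. y \<in> S \<Longrightarrow> g (f y) = g y" and "x \<in> S"
  shows "g ((f ^^ n) x) = g x"
proof -
  have "(f ^^ n) x \<in> S \<and> g ((f ^^ n) x) = g x"
    by (induction n) (auto simp: assms)
  then show ?thesis ..
qed

lemma funpow_commute:
  assumes "\<And>y. y \<in> S \<Longrightarrow> f y \<in> S" and "\<And>y. y \<in> S \<Longrightarrow> f (h y) = h (f y)" and "x \<in> S"
  shows "(f ^^ n) (h x) = h ((f ^^ n) x)"
proof -
  have "(f ^^ n) x \<in> S \<and> (f ^^ n) (h x) = h ((f ^^ n) x)"
    by (induction n) (auto simp: assms)
  then show ?thesis ..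
qed

lemma mean_limit_eqI:
  assumes "Hausdorff_space X" and "y \<in> topspace X"
    and "limitin (power_top X (Suc k)) (\<lambda>n. (barycentric k \<mu> ^^ n) x) (diag (Suc k) y) sequentially"
  shows "mean_limit X k \<mu> x = y"
  unfolding mean_limit_def
proof (rule the_equality)
  fix z
  assume "z \<in> topspace X \<and>
    limitin (power_top X (Suc k)) (\<lambda>n. (barycentric k \<mu> ^^ n) x) (diag (Suc k) z) sequentially"
  then have "diag (Suc k) z = diag (Suc k) y"
    using limitin_Hausdorff_unique assms Hausdorff_space_power_top trivial_limit_sequentially
    by metis
  then show "z = y" by (simp add: diag_Suc_inject)
qed (use assms in auto)

lemma
  assumes "Hausdorff_space X" and "power_convergent X k \<mu>" and "x \<in> tuples X (Suc k)"
  shows mean_limit_in_topspace: "mean_limit X k \<mu> x \<in> topspace X"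
    and limitin_mean_limit: "limitin (power_top X (Suc k)) (\<lambda>n. (barycentric k \<mu> ^^ n) x)
          (diag (Suc k) (mean_limit X k \<mu> x)) sequentially"
proof -
  obtain y where "y \<in> topspace X"
    "limitin (power_top X (Suc k)) (\<lambda>n. (barycentric k \<mu> ^^ n) x) (diag (Suc k) y) sequentially"
    using assms(2,3) unfolding power_convergent_def by blast
  with mean_limit_eqI[OF assms(1) this]
  show "mean_limit X k \<mu> x \<in> topspace X"
    and "limitin (power_top X (Suc k)) (\<lambda>n. (barycentric k \<mu> ^^ n) x)
          (diag (Suc k) (mean_limit X k \<mu> x)) sequentially"
    by simp_all
qed

lemma is_mean_mean_limit:
  assumes "Hausdorff_space X" and "is_mean X k \<mu>" and "power_convergent X k \<mu>"
  shows "is_mean X (Suc k) (mean_limit X k \<mu>)"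
  unfolding is_mean_def
proof (intro conjI ballI)
  show "mean_limit X k \<mu> x \<in> topspace X" if "x \<in> tuples X (Suc k)" for x
    using mean_limit_in_topspace assms(1,3) that .
  show "mean_limit X k \<mu> (diag (Suc k) y) = y" if y: "y \<in> topspace X" for y
    by (rule mean_limit_eqI[OF assms(1) y])
      (simp add: funpow_barycentric_diag[OF assms(2) y] diag_in_tuples y)
qed

lemma mean_limit_barycentric:
  assumes "Hausdorff_space X" and "power_convergent X k \<mu>" and x: "x \<in> tuples X (Suc k)"
  shows "mean_limit X k \<mu> (barycentric k \<mu> x) = mean_limit X k \<mu> x"
proof (rule mean_limit_eqI[OF assms(1) mean_limit_in_topspace[OF assms]])
  show "limitin (power_top X (Suc k)) (\<lambda>n. (barycentric k \<mu> ^^ n) (barycentric k \<mu> x))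
      (diag (Suc k) (mean_limit X k \<mu> x)) sequentially"
    using limitin_sequentially_offset[OF limitin_mean_limit[OF assms], of 1]
    by (simp add: funpow_Suc_right del: funpow.simps)
qed

lemma invariant_extension_mean_limit:
  assumes "Hausdorff_space X" and "is_mean X k \<mu>" and "power_convergent X k \<mu>"
  shows "invariant_extension X k \<mu> (mean_limit X k \<mu>)"
  using is_mean_mean_limit[OF assms] mean_limit_barycentric[OF assms(1,3)]
  unfolding invariant_extension_def by blast

lemma invariant_extension_unique:
  assumes "Hausdorff_space X" and "is_mean X k \<mu>" and "power_convergent X k \<mu>"
    and \<nu>_cont: "continuous_map (power_top X (Suc k)) X \<nu>"
    and \<nu>_inv: "invariant_extension X k \<mu> \<nu>"
    and x: "x \<in> tuples X (Suc k)"
  shows "\<nu> x = mean_limit X k \<mu> x"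
proof -
  let ?x' = "mean_limit X k \<mu> x"
  have \<nu>_orbit: "\<nu> ((barycentric k \<mu> ^^ n) x) = \<nu> x" for n
    using funpow_invariant[of "tuples X (Suc k)"] barycentric_in_tuples[OF assms(2)] \<nu>_inv x
    unfolding invariant_extension_def by blast
  have "\<nu> (diag (Suc k) ?x') = ?x'"
    using \<nu>_inv mean_limit_in_topspace[OF assms(1,3) x] unfolding invariant_extension_def is_mean_def
    by blast
  then have "limitin X (\<lambda>n. \<nu> x) ?x' sequentially"
    using continuous_map_limit[OF \<nu>_cont limitin_mean_limit[OF assms(1,3) x]]
    by (simp add: o_def \<nu>_orbit)
  moreover have "limitin X (\<lambda>n. \<nu> x) (\<nu> x) sequentially"
    using continuous_map_image_subset_topspace[OF \<nu>_cont] x by auto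
  ultimately show ?thesis
    using limitin_Hausdorff_unique assms(1) trivial_limit_sequentially by metis
qed

definition skip_index :: "nat \<Rightarrow> nat \<Rightarrow> nat" where
  "skip_index j i = (if i < j then i else Suc i)"

definition collapse_index :: "nat \<Rightarrow> nat \<Rightarrow> nat" where
  "collapse_index j m = (if m < j then m else m - 1)"

lemma skip_collapse_index: "m \<noteq> j \<Longrightarrow> skip_index j (collapse_index j m) = m"
  unfolding skip_index_def collapse_index_def by auto

lemma skip_index_neq: "skip_index j i \<noteq> j"
  by (simp add: skip_index_def)

lemma inj_skip_index: "inj (skip_index j)"
  by (rule injI) (auto simp: skip_index_def split: if_splits)

lemma drop_coord_eq: "drop_coord k j x = (\<lambda>i\<in>{..<k}. x (skip_index j i))"
  unfolding drop_coord_def skip_index_def by (simp add: if_distrib)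

lemma drop_coord_comp_permutes:
  assumes p: "p permutes {..<Suc k}" and j: "j < Suc k"
  obtains q where "q permutes {..<k}" and "\<And>x. drop_coord k j (x \<circ> p) = drop_coord k (p j) x \<circ> q"
proof
  define q where "q i = (if i < k then collapse_index (p j) (p (skip_index j i)) else i)" for i
  have p_ne: "p (skip_index j i) \<noteq> p j" for i
    using permutes_inj[OF p] skip_index_neq by (metis injD)
  have skip_q: "skip_index (p j) (q i) = p (skip_index j i)" if "i < k" for i
    using that p_ne skip_collapse_index by (simp add: q_def)
  have q_lt: "q i < k" if "i < k" for i
  proof -
    have "skip_index j i < Suc k" using that by (simp add: skip_index_def)
    then have "p (skip_index j i) < Suc k" "p j < Suc k"
      using j permutes_in_image[OF p] by simp_all
    with p_ne[of i] that show ?thesis by (auto simp: q_def collapse_index_def)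
  qed
  have "inj_on q {..<k}"
  proof
    fix a b assume "a \<in> {..<k}" "b \<in> {..<k}" "q a = q b"
    then have "p (skip_index j a) = p (skip_index j b)" by (metis lessThan_iff skip_q)
    then show "a = b"
      using permutes_inj[OF p] inj_skip_index by (metis injD)
  qed
  moreover have "q ` {..<k} \<subseteq> {..<k}" using q_lt by auto
  ultimately have "bij_betw q {..<k} {..<k}" by (simp add: bij_betw_def endo_inj_surj)
  then show "q permutes {..<k}" by (rule bij_imp_permutes) (auto simp: q_def)
  show "drop_coord k j (x \<circ> p) = drop_coord k (p j) x \<circ> q" for x
    unfolding drop_coord_eq by (rule ext) (auto simp: q_lt skip_q, simp add: q_def)
qed

lemma barycentric_comp_permutes:
  assumes sym: "symmetric_mean X k \<mu>" and p: "p permutes {..<Suc k}" and x: "x \<in> tuples X (Suc k)"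
  shows "barycentric k \<mu> (x \<circ> p) = barycentric k \<mu> x \<circ> p"
proof
  fix j
  show "barycentric k \<mu> (x \<circ> p) j = (barycentric k \<mu> x \<circ> p) j"
  proof (cases "j < Suc k")
    case True
    obtain q where "q permutes {..<k}" and "drop_coord k j (x \<circ> p) = drop_coord k (p j) x \<circ> q"
      using drop_coord_comp_permutes[OF p True] by blast
    then have "\<mu> (drop_coord k j (x \<circ> p)) = \<mu> (drop_coord k (p j) x)"
      using sym drop_coord_in_tuples[OF x] unfolding symmetric_mean_def by metis
    moreover have "p j < Suc k" using permutes_in_image[OF p] True by simp
    ultimately show ?thesis using True by (simp add: barycentric_def)
  next
    case False
    then show ?thesis using permutes_not_in[OF p] by (simp add: barycentric_def)
  qed
qed

lemma permutes_lessThan_iff: "p permutes {..<n} \<Longrightarrow> p i < n \<longleftrightarrow> i < n"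
  using permutes_in_image[of p "{..<n}" i] by simp

lemma comp_permutes_in_tuples: "p permutes {..<n} \<Longrightarrow> x \<in> tuples X n \<Longrightarrow> x \<circ> p \<in> tuples X n"
  by (auto simp: tuples_def PiE_iff extensional_def permutes_lessThan_iff permutes_not_in)

lemma continuous_map_comp_permutes:
  assumes p: "p permutes {..<n}"
  shows "continuous_map (power_top X n) (power_top X n) (\<lambda>x. x \<circ> p)"
  unfolding power_top_def continuous_map_componentwise
proof (intro conjI ballI)
  show "(\<lambda>x. x \<circ> p) ` topspace (product_topology (\<lambda>_. X) {..<n}) \<subseteq> extensional {..<n}"
    using comp_permutes_in_tuples[OF p, of _ X] by (auto simp: tuples_def PiE_iff)
  fix i assume "i \<in> {..<n}"
  then have "p i \<in> {..<n}" by (simp add: permutes_lessThan_iff[OF p])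
  then show "continuous_map (product_topology (\<lambda>_. X) {..<n}) X (\<lambda>x. (x \<circ> p) i)"
    using continuous_map_product_projection[of "p i" "{..<n}" "\<lambda>_. X"] by (simp add: o_def)
qed

lemma diag_comp_permutes: "p permutes {..<n} \<Longrightarrow> diag n y \<circ> p = diag n y"
  unfolding diag_def by (auto simp: permutes_lessThan_iff)

lemma symmetric_mean_limit:
  assumes "Hausdorff_space X" and "is_mean X k \<mu>" and "power_convergent X k \<mu>"
    and sym: "symmetric_mean X k \<mu>"
  shows "symmetric_mean X (Suc k) (mean_limit X k \<mu>)"
  unfolding symmetric_mean_def
proof (intro allI impI, elim conjE)
  fix p x assume p: "p permutes {..<Suc k}" and x: "x \<in> tuples X (Suc k)"
  have orbit_comp: "(barycentric k \<mu> ^^ n) (x \<circ> p) = (barycentric k \<mu> ^^ n) x \<circ> p" for n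
    using funpow_commute[where S = "tuples X (Suc k)" and h = "\<lambda>y. y \<circ> p"]
      barycentric_in_tuples[OF assms(2)] barycentric_comp_permutes[OF sym p] x
    by metis
  have "(\<lambda>y. y \<circ> p) \<circ> (\<lambda>n. (barycentric k \<mu> ^^ n) x) = (\<lambda>n. (barycentric k \<mu> ^^ n) (x \<circ> p))"
    by (rule ext) (simp only: comp_apply orbit_comp)
  then have "limitin (power_top X (Suc k)) (\<lambda>n. (barycentric k \<mu> ^^ n) (x \<circ> p))
      (diag (Suc k) (mean_limit X k \<mu> x) \<circ> p) sequentially"
    using continuous_map_limit[OF continuous_map_comp_permutes[OF p] limitin_mean_limit[OF assms(1,3) x]]
    by simp
  then have "limitin (power_top X (Suc k)) (\<lambda>n. (barycentric k \<mu> ^^ n) (x \<circ> p))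
      (diag (Suc k) (mean_limit X k \<mu> x)) sequentially"
    by (simp only: diag_comp_permutes[OF p])
  then show "mean_limit X k \<mu> (x \<circ> p) = mean_limit X k \<mu> x"
    by (rule mean_limit_eqI[OF assms(1) mean_limit_in_topspace[OF assms(1,3) x]])
qed

theorem proposition2p4:
  fixes X :: "'a topology" and k :: nat and \<mu> :: "(nat \<Rightarrow> 'a) \<Rightarrow> 'a"
  assumes "Hausdorff_space X"
    and "is_mean X k \<mu>"
    and "continuous_map (power_top X k) X \<mu>"
    and "power_convergent X k \<mu>"
  shows "invariant_extension X k \<mu> (mean_limit X k \<mu>)
    \<and> (\<forall>\<nu>. continuous_map (power_top X (Suc k)) X \<nu> \<and> invariant_extension X k \<mu> \<nu>
           \<longrightarrow> (\<forall>x\<in>tuples X (Suc k). \<nu> x = mean_limit X k \<mu> x))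
    \<and> (symmetric_mean X k \<mu> \<longrightarrow> symmetric_mean X (Suc k) (mean_limit X k \<mu>))"
  using invariant_extension_mean_limit[OF assms(1,2,4)]
    invariant_extension_unique[OF assms(1,2,4)]
    symmetric_mean_limit[OF assms(1,2,4)]
  by blast

end
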